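(* Let $M=p_1^{n_1}\cdots p_K^{n_K}$ with distinct primes and $n_\nu\in\mathbb{N}$, let $A\oplus B=\mathbb{Z}_M$, and fix $i$. Suppose $0\in B$ and that the tiling has $A$-uniform $(B,A)$ splitting parity in the $p_i$ direction, i.e. every fiber $a*F_i$ with $a\in A$ splits with parity $(B,A)$. Then $\Phi_{p_i^{n_i}}(X)\mid A(X)$.
   Context: $A\oplus B=\mathbb{Z}_M$ means every element of $\mathbb{Z}_M$ is uniquely $a+b$ with $a\in A$, $b\in B$. $A(X)=\sum_{a\in A}X^a$ with $A$ viewed in $\{0,\dots,M-1\}$; $\Phi_s$ is the $s$-th cyclotomic polynomial. $F_i=\{0,M/p_i,\dots,(p_i-1)M/p_i\}$, $x*F_i=\{x+f:f\in F_i\}$. For $Z\subset\mathbb{Z}_M$, $\Sigma_A(Z)=\{a\in A: a+b\in Z\text{ for some }b\in B\}$, $\Sigma_B(Z)=\{b\in B: a+b\in Z\text{ for some }a\in A\}$. A fiber $Z=x*F_i$ splits with parity $(B,A)$ if $p_i^{n_i}\mid b-b'$ for all $b,b'\in\Sigma_B(Z)$ and, for all distinct $a,a'\in\Sigma_A(Z)$, $p_i^{n_i-1}\mid a-a'$ but $p_i^{n_i}\nmid a-a'$. *)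

theory Defs
  imports "HOL-Analysis.Analysis" "HOL-Computational_Algebra.Computational_Algebra"
begin

definition cyclotomic :: "nat \<Rightarrow> complex poly" where
  "cyclotomic s = (\<Prod>k\<in>{k. 1 \<le> k \<and> k \<le> s \<and> coprime k s}.
       [:- cis (2 * pi * real k / real s), 1:])"

definition mask_poly :: "nat set \<Rightarrow> complex poly" where
  "mask_poly A = (\<Sum>a\<in>A. monom 1 a)"

definition tiling :: "nat \<Rightarrow> nat set \<Rightarrow> nat set \<Rightarrow> bool" where
  "tiling M A B \<longleftrightarrow> A \<subseteq> {0..<M} \<and> B \<subseteq> {0..<M} \<and>
     (\<forall>x\<in>{0..<M}. \<exists>!(a, b). a \<in> A \<and> b \<in> B \<and> (a + b) mod M = x)"

(* x * F_i = {x + f : f \<in> F_i}, F_i = {0, M/p, ..., (p-1)M/p} *)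
definition fiber :: "nat \<Rightarrow> nat \<Rightarrow> nat \<Rightarrow> nat set" where
  "fiber M p x = {(x + k * (M div p)) mod M | k. k < p}"

definition SigmaA :: "nat \<Rightarrow> nat set \<Rightarrow> nat set \<Rightarrow> nat set \<Rightarrow> nat set" where
  "SigmaA M A B Z = {a \<in> A. \<exists>b\<in>B. (a + b) mod M \<in> Z}"

definition SigmaB :: "nat \<Rightarrow> nat set \<Rightarrow> nat set \<Rightarrow> nat set \<Rightarrow> nat set" where
  "SigmaB M A B Z = {b \<in> B. \<exists>a\<in>A. (a + b) mod M \<in> Z}"

(* fiber Z in the p direction splits with parity (B,A); n = exponent of p in M *)
definition splits_BA :: "nat \<Rightarrow> nat \<Rightarrow> nat \<Rightarrow> nat set \<Rightarrow> nat set \<Rightarrow> nat set \<Rightarrow> bool" where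
  "splits_BA M p n A B Z \<longleftrightarrow>
     (\<forall>b\<in>SigmaB M A B Z. \<forall>b'\<in>SigmaB M A B Z. int (p ^ n) dvd (int b - int b')) \<and>
     (\<forall>a\<in>SigmaA M A B Z. \<forall>a'\<in>SigmaA M A B Z. a \<noteq> a' \<longrightarrow>
        int (p ^ (n - 1)) dvd (int a - int a') \<and> \<not> int (p ^ n) dvd (int a - int a'))"

end

theory Submission
  imports Defs "HOL-Number_Theory.Cong"
begin

(* Let n be the exponent of p in M.  Decompose each translate a + M/p (a \<in> A) along the tiling as
   \<phi> a + \<beta> a.  Both 0 and \<beta> a lie in \<Sigma>_B of the fiber through a, so the splitting parity gives
   p^n | \<beta> a, i.e. \<phi> a \<equiv> a + M/p (mod p^n); and \<phi> permutes A by uniqueness of decompositions.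
   Hence A(\<zeta>) = \<zeta>^(M/p) A(\<zeta>) at every primitive p^n-th root of unity \<zeta>, while \<zeta>^(M/p) \<noteq> 1 since
   p^n does not divide M/p.  So every root of \<Phi>_(p^n) is a root of A(X). *)

lemma prod_linear_factors_dvd:
  fixes f :: "'a::idom poly"
  assumes "finite Z" "\<And>z. z \<in> Z \<Longrightarrow> poly f z = 0"
  shows "(\<Prod>z\<in>Z. [:- z, 1:]) dvd f"
  using assms
proof (induction Z arbitrary: f rule: finite_induct)
  case empty
  then show ?case by simp
next
  case (insert x Z)
  have "[:- x, 1:] dvd f"
    using insert.prems[of x] by (simp add: poly_eq_0_iff_dvd)
  then obtain g where g: "f = [:- x, 1:] * g" ..
  have "poly g z = 0" if "z \<in> Z" for z
    using insert.prems[of z] that insert.hyps(2) g by auto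
  then have "(\<Prod>z\<in>Z. [:- z, 1:]) dvd g"
    by (rule insert.IH)
  then have "[:- x, 1:] * (\<Prod>z\<in>Z. [:- z, 1:]) dvd f"
    unfolding g by (rule mult_dvd_mono[OF dvd_refl])
  then show ?case
    using insert.hyps by simp
qed

lemma cis_2pi_div_eq_1_iff:
  assumes "s > 0"
  shows "cis (2 * pi * real j / real s) = 1 \<longleftrightarrow> s dvd j"
  using complex_root_unity_eq_1[of s j] assms
  by (simp add: cis_conv_exp mult_ac)

lemma cis_2pi_div_power:
  "cis (2 * pi * real k / real s) ^ j = cis (2 * pi * real (k * j) / real s)"
proof -
  have "real j * (2 * pi * real k / real s) = 2 * pi * real (k * j) / real s"
    by simp
  then show ?thesis
    by (simp only: Complex.DeMoivre)
qed

lemma cis_2pi_div_power_eq_1_iff: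
  assumes "s > 0" "coprime k s"
  shows "cis (2 * pi * real k / real s) ^ j = 1 \<longleftrightarrow> s dvd j"
proof -
  have "cis (2 * pi * real k / real s) ^ j = 1 \<longleftrightarrow> s dvd k * j"
    unfolding cis_2pi_div_power by (rule cis_2pi_div_eq_1_iff[OF assms(1)])
  also have "\<dots> \<longleftrightarrow> s dvd j"
    using assms(2) by (simp add: coprime_commute coprime_dvd_mult_right_iff)
  finally show ?thesis .
qed

lemma inj_on_cis_2pi_div:
  assumes "s > 0"
  shows "inj_on (\<lambda>k. cis (2 * pi * real k / real s)) {1..s}"
proof -
  have eq: "k = k'"
    if "k' \<le> k" "k \<in> {1..s}" "k' \<in> {1..s}"
       "cis (2 * pi * real k / real s) = cis (2 * pi * real k' / real s)" for k k'
  proof -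
    have "2 * pi * real k / real s = 2 * pi * real k' / real s + 2 * pi * real (k - k') / real s"
      using \<open>k' \<le> k\<close> by (simp add: diff_divide_distrib algebra_simps)
    then have "cis (2 * pi * real k / real s)
        = cis (2 * pi * real k' / real s) * cis (2 * pi * real (k - k') / real s)"
      by (simp only: cis_mult)
    with that(4) have "cis (2 * pi * real (k - k') / real s) = 1"
      by simp
    then have "s dvd k - k'"
      using cis_2pi_div_eq_1_iff[OF assms] by blast
    moreover have "k - k' < s"
      using that(2,3) by auto
    ultimately have "k - k' = 0"
      using nat_dvd_not_less by blast
    with \<open>k' \<le> k\<close> show "k = k'"
      by simp
  qed
  show ?thesis
  proof (rule inj_onI)
    fix k k' assume "k \<in> {1..s}" "k' \<in> {1..s}"
      and "cis (2 * pi * real k / real s) = cis (2 * pi * real k' / real s)"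
    then show "k = k'"
      using eq[of k' k] eq[of k k'] by (cases "k' \<le> k") auto
  qed
qed

lemma cyclotomic_dvdI:
  assumes "s > 0"
    and "\<And>k. 1 \<le> k \<Longrightarrow> k \<le> s \<Longrightarrow> coprime k s \<Longrightarrow> poly f (cis (2 * pi * real k / real s)) = 0"
  shows "cyclotomic s dvd f"
proof -
  let ?K = "{k. 1 \<le> k \<and> k \<le> s \<and> coprime k s}"
  let ?\<zeta> = "\<lambda>k. cis (2 * pi * real k / real s)"
  have "inj_on ?\<zeta> ?K"
    by (rule inj_on_subset[OF inj_on_cis_2pi_div[OF assms(1)]]) auto
  then have "cyclotomic s = (\<Prod>z\<in>?\<zeta> ` ?K. [:- z, 1:])"
    unfolding cyclotomic_def by (simp add: prod.reindex)
  also have "\<dots> dvd f"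
    using assms(2) by (intro prod_linear_factors_dvd) auto
  finally show ?thesis .
qed

lemma power_eq_power_if_cong:
  fixes z :: "'a::monoid_mult"
  assumes "z ^ q = 1" "[i = j] (mod q)"
  shows "z ^ i = z ^ j"
proof -
  have reduce: "z ^ m = z ^ (m mod q)" for m
  proof -
    have "z ^ m = (z ^ q) ^ (m div q) * z ^ (m mod q)"
      by (metis mult_div_mod_eq power_add power_mult)
    then show ?thesis
      using assms(1) by simp
  qed
  show ?thesis
    using reduce[of i] reduce[of j] assms(2) unfolding cong_def by simp
qed

lemma sum_powers_eq_0_if_translate_perm:
  fixes z :: "'a::idom"
  assumes "bij_betw \<phi> A A" "z ^ q = 1" "z ^ d \<noteq> 1"
    and "\<And>a. a \<in> A \<Longrightarrow> [\<phi> a = a + d] (mod q)"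
  shows "(\<Sum>a\<in>A. z ^ a) = 0"
proof -
  have "(\<Sum>a\<in>A. z ^ a) = (\<Sum>a\<in>A. z ^ \<phi> a)"
    using sum.reindex_bij_betw[OF assms(1), of "power z"] by simp
  also have "\<dots> = (\<Sum>a\<in>A. z ^ (a + d))"
    using power_eq_power_if_cong[OF assms(2) assms(4)] by simp
  also have "\<dots> = z ^ d * (\<Sum>a\<in>A. z ^ a)"
    by (simp add: power_add sum_distrib_left mult.commute)
  finally have "(1 - z ^ d) * (\<Sum>a\<in>A. z ^ a) = 0"
    by (simp add: algebra_simps)
  with assms(3) show ?thesis
    by simp
qed

lemma tiling_decomp_unique:
  assumes "tiling M A B" "a \<in> A" "a' \<in> A" "b \<in> B" "b' \<in> B"
    and "[a + b = a' + b'] (mod M)"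
  shows "a = a' \<and> b = b'"
proof -
  have "M > 0"
    using assms(1,2) unfolding tiling_def by auto
  then have "(a + b) mod M \<in> {0..<M}"
    by simp
  then have "\<exists>!(x, y). x \<in> A \<and> y \<in> B \<and> (x + y) mod M = (a + b) mod M"
    using assms(1) unfolding tiling_def by blast
  then show ?thesis
    using assms(2-6) unfolding cong_def by auto
qed

lemma tiling_decomp_exists:
  assumes "tiling M A B" "M > 0"
  obtains a b where "a \<in> A" "b \<in> B" "[a + b = x] (mod M)"
proof -
  have "x mod M \<in> {0..<M}"
    using assms(2) by simp
  then obtain a b where "a \<in> A" "b \<in> B" "(a + b) mod M = x mod M"
    using assms(1) unfolding tiling_def by blast
  then show ?thesis
    using that unfolding cong_def by blast
qed

(* If \<phi> a = \<phi> a', then a + \<beta> a' and a' + \<beta> a are two decompositions of the same residue. *)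
lemma tiling_translate_perm:
  assumes "tiling M A B" "M > 0"
  obtains \<phi> \<beta> where "bij_betw \<phi> A A" "\<And>a. a \<in> A \<Longrightarrow> \<beta> a \<in> B"
    "\<And>a. a \<in> A \<Longrightarrow> [\<phi> a + \<beta> a = a + t] (mod M)"
proof -
  have "\<forall>a. \<exists>a' b. a' \<in> A \<and> b \<in> B \<and> [a' + b = a + t] (mod M)"
    using tiling_decomp_exists[OF assms] by metis
  then obtain \<phi> \<beta> where \<phi>: "\<And>a. \<phi> a \<in> A" and \<beta>: "\<And>a. \<beta> a \<in> B"
    and dec: "\<And>a. [\<phi> a + \<beta> a = a + t] (mod M)"
    by metis
  have "inj_on \<phi> A"
  proof (rule inj_onI)
    fix a a' assume "a \<in> A" "a' \<in> A" "\<phi> a = \<phi> a'"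
    have "[a + \<beta> a' + t = (\<phi> a + \<beta> a) + \<beta> a'] (mod M)"
      using cong_add[OF cong_sym[OF dec[of a]] cong_refl, of "\<beta> a'"]
      by (simp add: ac_simps)
    also have "\<phi> a + \<beta> a + \<beta> a' = (\<phi> a' + \<beta> a') + \<beta> a"
      using \<open>\<phi> a = \<phi> a'\<close> by simp
    also have "[\<dots> = a' + \<beta> a + t] (mod M)"
      using cong_add[OF dec[of a'] cong_refl, of "\<beta> a"]
      by (simp add: ac_simps)
    finally have "[a + \<beta> a' = a' + \<beta> a] (mod M)"
      by (simp add: cong_add_rcancel_nat)
    then show "a = a'"
      using tiling_decomp_unique[OF assms(1) \<open>a \<in> A\<close> \<open>a' \<in> A\<close> \<beta> \<beta>] by blast
  qed
  moreover have "finite A"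
    using assms(1) unfolding tiling_def by (meson finite_atLeastLessThan finite_subset)
  ultimately have "bij_betw \<phi> A A"
    using \<phi> by (simp add: bij_betw_def endo_inj_surj image_subset_iff)
  then show ?thesis
    using that \<beta> dec by blast
qed

lemma tiling_translate_perm_cong_prime_power:
  assumes "tiling M A B" "M > 0" "p > 1" "p ^ n dvd M" "0 \<in> B"
    and "\<forall>a\<in>A. splits_BA M p n A B (fiber M p a)"
  obtains \<phi> where "bij_betw \<phi> A A" "\<And>a. a \<in> A \<Longrightarrow> [\<phi> a = a + M div p] (mod p ^ n)"
proof -
  obtain \<phi> \<beta> where \<phi>: "bij_betw \<phi> A A" and \<beta>: "\<And>a. a \<in> A \<Longrightarrow> \<beta> a \<in> B"
    and dec: "\<And>a. a \<in> A \<Longrightarrow> [\<phi> a + \<beta> a = a + M div p] (mod M)"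
    using tiling_translate_perm[OF assms(1,2)] by metis
  have in_fiber: "(a + k * (M div p)) mod M \<in> fiber M p a" if "k < p" for a k
    unfolding fiber_def using that by blast
  have "[\<phi> a = a + M div p] (mod p ^ n)" if a: "a \<in> A" for a
  proof -
    have "(\<phi> a + \<beta> a) mod M = (a + 1 * (M div p)) mod M"
      using dec[OF a] unfolding cong_def by simp
    then have "(\<phi> a + \<beta> a) mod M \<in> fiber M p a"
      using in_fiber[of 1 a] assms(3) by simp
    then have "\<beta> a \<in> SigmaB M A B (fiber M p a)"
      unfolding SigmaB_def using bij_betwE[OF \<phi>] \<beta> a by blast
    moreover have "0 \<in> SigmaB M A B (fiber M p a)"
      unfolding SigmaB_def using in_fiber[of 0 a] assms(3,5) a by fastforce
    ultimately have "int (p ^ n) dvd int (\<beta> a) - int 0"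
      using assms(6) a unfolding splits_BA_def by blast
    then have "p ^ n dvd \<beta> a"
      unfolding of_nat_0 diff_0_right int_dvd_int_iff .
    then have "[\<phi> a = \<phi> a + \<beta> a] (mod p ^ n)"
      by (simp add: cong_sym_eq[of "\<phi> a"] cong_add_lcancel_0_nat cong_0_iff)
    also have "[\<phi> a + \<beta> a = a + M div p] (mod p ^ n)"
      using dec[OF a] assms(4) by (rule cong_dvd_modulus_nat)
    finally show ?thesis .
  qed
  with \<phi> show ?thesis
    using that by blast
qed

lemma power_multiplicity_not_dvd_div:
  fixes M p :: nat
  assumes "M > 0" "prime p" "p dvd M"
  shows "\<not> p ^ multiplicity p M dvd M div p"
proof
  assume "p ^ multiplicity p M dvd M div p"
  then have "p ^ Suc (multiplicity p M) dvd M"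
    using assms(3) by (metis dvd_div_mult_self mult_dvd_mono dvd_refl power_Suc2)
  with assms show False
    using power_dvd_iff_le_multiplicity[of M p "Suc (multiplicity p M)"] prime_gt_1_nat[of p] by auto
qed

theorem corollary4p9:
  fixes M p :: nat and A B :: "nat set"
  assumes "M > 0"
    and "prime p" and "p dvd M"
    and "tiling M A B"
    and "0 \<in> B"
    and "\<forall>a\<in>A. splits_BA M p (multiplicity p M) A B (fiber M p a)"
  shows "cyclotomic (p ^ multiplicity p M) dvd mask_poly A"
proof -
  define q where "q = p ^ multiplicity p M"
  have "p > 1"
    using assms(2) prime_gt_1_nat by blast
  obtain \<phi> where "bij_betw \<phi> A A" and \<phi>: "\<And>a. a \<in> A \<Longrightarrow> [\<phi> a = a + M div p] (mod q)"
    using tiling_translate_perm_cong_prime_power[OF assms(4,1) \<open>p > 1\<close> multiplicity_dvd assms(5,6)]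
    unfolding q_def by metis
  have "\<not> q dvd M div p"
    unfolding q_def by (rule power_multiplicity_not_dvd_div[OF assms(1-3)])
  show ?thesis
    unfolding q_def[symmetric]
  proof (rule cyclotomic_dvdI)
    show "q > 0"
      using \<open>p > 1\<close> unfolding q_def by simp
    fix k assume "coprime k q"
    define z where "z = cis (2 * pi * real k / real q)"
    have "z ^ q = 1" "z ^ (M div p) \<noteq> 1"
      using cis_2pi_div_power_eq_1_iff[OF \<open>q > 0\<close> \<open>coprime k q\<close>] \<open>\<not> q dvd M div p\<close>
      unfolding z_def by simp_all
    then have "(\<Sum>a\<in>A. z ^ a) = 0"
      using sum_powers_eq_0_if_translate_perm[OF \<open>bij_betw \<phi> A A\<close>] \<phi> by blast
    then show "poly (mask_poly A) z = 0"
      unfolding mask_poly_def by (simp add: poly_sum poly_monom)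
  qed
qed

end
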